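(* Consider a two-player perfect-information game of depth $D$, with notation as in the context. Let $\{\tilde U_s\}_{s\in\mathcal S}$ be learned EPFs and $\tilde\pi$ the strategy they induce. Suppose $L_\infty(\tilde U_s,\tilde U^{\mathrm{target}}_s)\le\epsilon$ for all $s\in\mathcal S$. Let $\pi^*$ be an optimal SEFCE. Then $|R_1(\tilde\pi)-R_1(\pi^* )|=\mathcal O(D\epsilon)$, i.e. it is at most $C D\epsilon$ for an absolute constant $C$ that does not depend on the game, on $\epsilon$ or on the learned EPFs.
   Context: A two-player perfect-information game is a finite rooted tree whose vertices are the states $s\in\mathcal S$. The leaves $\mathcal L$ carry payoffs $r_1(\ell),r_2(\ell)\in\mathbb R$ for the leader $\mathsf P_1$ and the follower $\mathsf P_2$. Each non-leaf state belongs to exactly one of $\mathcal S_1$ (leader) or $\mathcal S_2$ (follower). $\mathcal C(s)$ is the set of children of $s$, and $T(a;s)$ is the child reached by action $a$. The depth $D$ is the maximum number of edges on a root-to-leaf path. Define $\underline V,\overline V$ by backward induction: - for a leaf: $\underline V(\ell)=\overline V(\ell)=r_2(\ell)$; - $\underline V(s)=\min_{s'\in\mathcal C(s)}\underline V(s')$ for $s\in\mathcal S_1$; - $\underline V(s)=\max_{s'\in\mathcal C(s)}\underline V(s')$ for $s\in\mathcal S_2$; - $\overline V(s)=\max_{s'\in\mathcal C(s)}\overline V(s')$ for every non-leaf $s$. For $s\in\mathcal S_2$ and $s'\in\mathcal C(s)$, let $\tau(s')=\max_{s^!\in\mathcal C(s),s^!\ne s'}\underline V(s^!)$. Let $\beta(s')=\tau(s')$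 if the parent of $s'$ is in $\mathcal S_2$, and $\beta(s')=-\infty$ if it is in $\mathcal S_1$. For $g:\mathbb R\to\mathbb R\cup\{-\infty\}$: - $\bigwedge_i g_i$ is the upper concave envelope, i.e. the pointwise infimum of all concave $h\ge\max_i g_i$; - $[g\triangleright t](\mu)=g(\mu)$ if $\mu\ge t$ and $-\infty$ otherwise. Exact EPFs: $U_\ell(\mu)=r_1(\ell)$ if $\mu=r_2(\ell)$ and $-\infty$ otherwise; $U_s=\bigwedge_{s'\in\mathcal C(s)}(U_{s'}\triangleright\beta(s'))$ for non-leaf $s$. Learned EPFs: $\tilde U_\ell=U_\ell$ for leaves. For each non-leaf $s$, $\tilde U_s$ is a piecewise linear function, the linear interpolation of finitely many points with $x$-coordinates in $[\underline V(s),\overline V(s)]$ including both endpoints. It is real-valued on that interval and $-\infty$ outside. The target is $\tilde U^{\mathrm{target}}_s=\bigwedge_{s'\in\mathcal C(s)}(\tilde U_{s'}\triangleright\beta(s'))$ for non-leaf $s$, and $\tilde U^{\mathrm{target}}_\ell=\tilde U_\ell$ for leaves. The loss is $L_\infty(f,g)=\sup_{\mu\in\mathbb R}|f(\mu)-g(\mu)|$, with the convention $|(-\infty)-(-\infty)|=0$. Induced strategy $\tilde\pi$: start at the root with promise $\mu_{\mathrm{root}}\in\arg\max\tilde U_{\mathrm{root}}$. At a non-leaf $s$ with promise $\mu$, pick a maximizer $(s',s'',t,\mu',\mu'')$, over $s',s''\in\mathcal C(s)$, $t\in[0,1]$ with $t\mu'+(1-t)\mu''=\mu$, of $t[\tilde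 U_{s'}\triangleright\beta(s')](\mu')+(1-t)[\tilde U_{s''}\triangleright\beta(s'')](\mu'')$. Move to $s'$ with probability $t$ and promise $\mu'$, and to $s''$ with probability $1-t$ and promise $\mu''$. At follower states this is a recommendation that the follower follows. $R_1(\tilde\pi)$ is the leader's expected leaf payoff under this play. SEFCE: a (possibly recommendation-/history-dependent) joint strategy $\pi$ of leader and follower is a Stackelberg extensive-form correlated equilibrium if, for every follower state $s$ and action $a$ recommended with positive probability, the follower's expected payoff from $T(a;s)$ onward under $\pi$ is at least $\tau(T(a;s))$. The payoff threshold reflects that deviations are punished by the leader's grim strategy. An SEFCE is optimal if it maximizes the leader's expected payoff $R_1(\pi)$. *)

theory Defs
  imports "HOL-Analysis.Analysis"
begin

datatype player = Leader | Follower

text \<open>A leaf carries (r1, r2) = (leader payoff, follower payoff);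
  an inner node carries its owner and the (ordered) list of its children.
  States are identified with positions (paths of child indices from the root), so that
  equal subtrees at different places are different states.\<close>
datatype gtree = Leaf real real | Node player "gtree list"

fun wf_tree :: "gtree \<Rightarrow> bool" where
  "wf_tree (Leaf a b) = True"
| "wf_tree (Node P ts) = (ts \<noteq> [] \<and> (\<forall>u\<in>set ts. wf_tree u))"

fun is_leaf :: "gtree \<Rightarrow> bool" where
  "is_leaf (Leaf a b) = True"
| "is_leaf (Node P ts) = False"

fun kids :: "gtree \<Rightarrow> gtree list" where
  "kids (Leaf a b) = []"
| "kids (Node P ts) = ts"

fun owner :: "gtree \<Rightarrow> player" where
  "owner (Leaf a b) = Leader"   \<comment> \<open>irrelevant for leaves\<close>
| "owner (Node P ts) = P"

fun rew1 :: "gtree \<Rightarrow> real" where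
  "rew1 (Leaf a b) = a"
| "rew1 (Node P ts) = 0"

fun rew2 :: "gtree \<Rightarrow> real" where
  "rew2 (Leaf a b) = b"
| "rew2 (Node P ts) = 0"

primrec subtree :: "gtree \<Rightarrow> nat list \<Rightarrow> gtree" where
  "subtree t [] = t"
| "subtree t (i # p) = subtree (kids t ! i) p"

primrec valid_pos :: "gtree \<Rightarrow> nat list \<Rightarrow> bool" where
  "valid_pos t [] = True"
| "valid_pos t (i # p) = (i < length (kids t) \<and> valid_pos (kids t ! i) p)"

definition leaf_positions :: "gtree \<Rightarrow> nat list set" where
  "leaf_positions t = {p. valid_pos t p \<and> is_leaf (subtree t p)}"

fun depth :: "gtree \<Rightarrow> nat" where
  "depth (Leaf a b) = 0"
| "depth (Node P ts) = Suc (Max (set (map depth ts)))"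

fun vlow :: "gtree \<Rightarrow> real" where
  "vlow (Leaf a b) = b"
| "vlow (Node P ts) =
     (if P = Leader then Min (set (map vlow ts)) else Max (set (map vlow ts)))"

fun vhigh :: "gtree \<Rightarrow> real" where
  "vhigh (Leaf a b) = b"
| "vhigh (Node P ts) = Max (set (map vhigh ts))"

text \<open>\<open>\<tau>\<close> of the child \<open>i\<close> of the node at position \<open>p\<close>: maximum of \<open>\<underline>V\<close> over the
  other children (the maximum of an empty set is \<open>-\<infinity>\<close>).\<close>
definition tau :: "gtree \<Rightarrow> nat list \<Rightarrow> nat \<Rightarrow> ereal" where
  "tau t p i = (let ts = kids (subtree t p) in
     Sup ((\<lambda>j. ereal (vlow (ts ! j))) ` {j. j < length ts \<and> j \<noteq> i}))"

definition beta :: "gtree \<Rightarrow> nat list \<Rightarrow> nat \<Rightarrow> ereal" where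
  "beta t p i = (if owner (subtree t p) = Follower then tau t p i else - \<infinity>)"

definition concave_ext :: "(real \<Rightarrow> ereal) \<Rightarrow> bool" where
  "concave_ext h \<longleftrightarrow> (\<forall>x y (a::real) (b::real) (w::real).
      0 \<le> w \<longrightarrow> w \<le> 1 \<longrightarrow> ereal a \<le> h x \<longrightarrow> ereal b \<le> h y \<longrightarrow>
      ereal (w * a + (1 - w) * b) \<le> h (w * x + (1 - w) * y))"

definition cenv :: "(real \<Rightarrow> ereal) \<Rightarrow> real \<Rightarrow> ereal" where
  "cenv g \<mu> = Inf {h \<mu> | h. concave_ext h \<and> (\<forall>x. h x \<noteq> \<infinity>) \<and> (\<forall>x. g x \<le> h x)}"

definition restr :: "(real \<Rightarrow> ereal) \<Rightarrow> ereal \<Rightarrow> real \<Rightarrow> ereal" where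
  "restr g t \<mu> = (if t \<le> ereal \<mu> then g \<mu> else - \<infinity>)"

definition Uleaf :: "real \<Rightarrow> real \<Rightarrow> real \<Rightarrow> ereal" where
  "Uleaf r1 r2 \<mu> = (if \<mu> = r2 then ereal r1 else - \<infinity>)"

text \<open>\<open>|f(\<mu>) - g(\<mu>)|\<close> with the convention \<open>|(-\<infinity>) - (-\<infinity>)| = 0\<close>.\<close>
definition edist :: "ereal \<Rightarrow> ereal \<Rightarrow> ereal" where
  "edist a b = (if a = b then 0 else \<bar>a - b\<bar>)"

definition Linf :: "(real \<Rightarrow> ereal) \<Rightarrow> (real \<Rightarrow> ereal) \<Rightarrow> ereal" where
  "Linf f g = (SUP \<mu>. edist (f \<mu>) (g \<mu>))"

definition pwl_on :: "real \<Rightarrow> real \<Rightarrow> (real \<Rightarrow> ereal) \<Rightarrow> bool" where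
  "pwl_on a b f \<longleftrightarrow> (\<exists>xs ys :: real list.
      xs \<noteq> [] \<and> length ys = length xs \<and> sorted_wrt (<) xs \<and>
      hd xs = a \<and> last xs = b \<and>
      f (hd xs) = ereal (hd ys) \<and>
      (\<forall>k. Suc k < length xs \<longrightarrow> (\<forall>x. xs ! k \<le> x \<and> x \<le> xs ! Suc k \<longrightarrow>
          f x = ereal (ys ! k + (x - xs ! k) / (xs ! Suc k - xs ! k) * (ys ! Suc k - ys ! k)))) \<and>
      (\<forall>x. x < a \<or> b < x \<longrightarrow> f x = - \<infinity>))"

definition learned_epfs :: "gtree \<Rightarrow> (nat list \<Rightarrow> real \<Rightarrow> ereal) \<Rightarrow> bool" where
  "learned_epfs t U \<longleftrightarrow> (\<forall>p. valid_pos t p \<longrightarrow>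
     (if is_leaf (subtree t p)
      then U p = Uleaf (rew1 (subtree t p)) (rew2 (subtree t p))
      else pwl_on (vlow (subtree t p)) (vhigh (subtree t p)) (U p)))"

definition child_fn :: "gtree \<Rightarrow> (nat list \<Rightarrow> real \<Rightarrow> ereal) \<Rightarrow> nat list \<Rightarrow> nat \<Rightarrow> real \<Rightarrow> ereal" where
  "child_fn t U p i = restr (U (p @ [i])) (beta t p i)"

definition target :: "gtree \<Rightarrow> (nat list \<Rightarrow> real \<Rightarrow> ereal) \<Rightarrow> nat list \<Rightarrow> real \<Rightarrow> ereal" where
  "target t U p = (if is_leaf (subtree t p) then U p
     else cenv (\<lambda>\<mu>. SUP i\<in>{..<length (kids (subtree t p))}. child_fn t U p i \<mu>))"

text \<open>A choice \<open>(i, j, \<lambda>, \<mu>', \<mu>'')\<close> at position \<open>p\<close> with promise \<open>\<mu>\<close>: move to child \<open>i\<close> with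
  probability \<open>\<lambda>\<close> and promise \<open>\<mu>'\<close>, and to child \<open>j\<close> with probability \<open>1-\<lambda>\<close> and promise \<open>\<mu>''\<close>.\<close>
type_synonym choice = "nat \<times> nat \<times> real \<times> real \<times> real"

definition feasible_choice :: "gtree \<Rightarrow> nat list \<Rightarrow> real \<Rightarrow> choice \<Rightarrow> bool" where
  "feasible_choice t p \<mu> c = (case c of (i, j, w, \<mu>1, \<mu>2) \<Rightarrow>
     i < length (kids (subtree t p)) \<and> j < length (kids (subtree t p)) \<and>
     0 \<le> w \<and> w \<le> 1 \<and> w * \<mu>1 + (1 - w) * \<mu>2 = \<mu>)"

definition choice_obj :: "gtree \<Rightarrow> (nat list \<Rightarrow> real \<Rightarrow> ereal) \<Rightarrow> nat list \<Rightarrow> choice \<Rightarrow> ereal" where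
  "choice_obj t U p c = (case c of (i, j, w, \<mu>1, \<mu>2) \<Rightarrow>
     ereal w * child_fn t U p i \<mu>1 + ereal (1 - w) * child_fn t U p j \<mu>2)"

definition is_maximizer :: "gtree \<Rightarrow> (nat list \<Rightarrow> real \<Rightarrow> ereal) \<Rightarrow> nat list \<Rightarrow> real \<Rightarrow> choice \<Rightarrow> bool" where
  "is_maximizer t U p \<mu> c \<longleftrightarrow> feasible_choice t p \<mu> c \<and>
     (\<forall>c'. feasible_choice t p \<mu> c' \<longrightarrow> choice_obj t U p c' \<le> choice_obj t U p c)"

definition induced_selection :: "gtree \<Rightarrow> (nat list \<Rightarrow> real \<Rightarrow> ereal) \<Rightarrow> (nat list \<Rightarrow> real \<Rightarrow> choice) \<Rightarrow> bool" where
  "induced_selection t U sel \<longleftrightarrow> (\<forall>p \<mu>. valid_pos t p \<longrightarrow> \<not> is_leaf (subtree t p) \<longrightarrow>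
      is_maximizer t U p \<mu> (sel p \<mu>))"

text \<open>Leader's expected leaf payoff when play is at position \<open>p\<close> with promise \<open>\<mu>\<close>
  (the fuel \<open>n\<close> only ensures termination; \<open>depth t\<close> is always enough).\<close>
primrec play_value :: "gtree \<Rightarrow> (nat list \<Rightarrow> real \<Rightarrow> choice) \<Rightarrow> nat \<Rightarrow> nat list \<Rightarrow> real \<Rightarrow> real" where
  "play_value t sel 0 p \<mu> = rew1 (subtree t p)"
| "play_value t sel (Suc n) p \<mu> =
     (if is_leaf (subtree t p) then rew1 (subtree t p)
      else (case sel p \<mu> of (i, j, w, \<mu>1, \<mu>2) \<Rightarrow>
        w * play_value t sel n (p @ [i]) \<mu>1 + (1 - w) * play_value t sel n (p @ [j]) \<mu>2))"

definition induced_payoff :: "gtree \<Rightarrow> (nat list \<Rightarrow> real \<Rightarrow> choice) \<Rightarrow> real \<Rightarrow> real" where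
  "induced_payoff t sel \<mu>root = play_value t sel (depth t) [] \<mu>root"

text \<open>A (correlated, possibly history-dependent) joint strategy is represented by the
  probability distribution it induces on the leaves (positions).\<close>
definition leaf_dist :: "gtree \<Rightarrow> (nat list \<Rightarrow> real) \<Rightarrow> bool" where
  "leaf_dist t q \<longleftrightarrow> (\<forall>p. 0 \<le> q p) \<and> (\<forall>p. p \<notin> leaf_positions t \<longrightarrow> q p = 0) \<and>
     (\<Sum>p\<in>leaf_positions t. q p) = 1"

definition reach_prob :: "gtree \<Rightarrow> (nat list \<Rightarrow> real) \<Rightarrow> nat list \<Rightarrow> real" where
  "reach_prob t q c = (\<Sum>l\<in>{l\<in>leaf_positions t. (\<exists>r. l = c @ r)}. q l)"

definition R1 :: "gtree \<Rightarrow> (nat list \<Rightarrow> real) \<Rightarrow> real" where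
  "R1 t q = (\<Sum>l\<in>leaf_positions t. q l * rew1 (subtree t l))"

definition R2_from :: "gtree \<Rightarrow> (nat list \<Rightarrow> real) \<Rightarrow> nat list \<Rightarrow> real" where
  "R2_from t q c = (\<Sum>l\<in>{l\<in>leaf_positions t. (\<exists>r. l = c @ r)}. q l * rew2 (subtree t l)) / reach_prob t q c"

definition is_SEFCE :: "gtree \<Rightarrow> (nat list \<Rightarrow> real) \<Rightarrow> bool" where
  "is_SEFCE t q \<longleftrightarrow> leaf_dist t q \<and>
     (\<forall>p i. valid_pos t p \<longrightarrow> \<not> is_leaf (subtree t p) \<longrightarrow> owner (subtree t p) = Follower \<longrightarrow>
        i < length (kids (subtree t p)) \<longrightarrow> reach_prob t q (p @ [i]) > 0 \<longrightarrow>
        tau t p i \<le> ereal (R2_from t q (p @ [i])))"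

definition optimal_SEFCE :: "gtree \<Rightarrow> (nat list \<Rightarrow> real) \<Rightarrow> bool" where
  "optimal_SEFCE t q \<longleftrightarrow> is_SEFCE t q \<and> (\<forall>q'. is_SEFCE t q' \<longrightarrow> R1 t q' \<le> R1 t q)"

end

theory Submission
  imports Defs
begin

text \<open>Write \<open>U\<close> for the learned EPFs and let \<open>a = U\<^sub>r\<^sub>o\<^sub>o\<^sub>t(\<mu>\<^sub>r\<^sub>o\<^sub>o\<^sub>t)\<close>. At every state,
  the value of the selected choice as a function of the promise is concave, since two chords
  below the graphs of the restricted child EPFs can be merged into one; it dominates every
  child, so it is at least the target, which is \<open>\<epsilon>\<close>-close to \<open>U\<close>. Hence each step of the
  induced play keeps the follower's promise and loses at most \<open>\<epsilon>\<close> of the leader's, so the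
  induced payoff is at least \<open>a - D\<epsilon>\<close>. Conversely, conditioned on the states it reaches, an
  SEFCE is a convex combination of its conditionals at the children, which its incentive
  constraints put into the domains of the restricted child EPFs; Jensen's inequality for the
  concave envelope then gives \<open>R\<^sub>1(\<pi>\<^sup>*) - D\<epsilon> \<le> U\<^sub>r\<^sub>o\<^sub>o\<^sub>t(R\<^sub>2(\<pi>\<^sup>*)) \<le> a\<close>. Finally, promise
  keeping and promises of at least \<open>\<beta>\<close> at follower states make the induced play an SEFCE, so
  its payoff is at most \<open>R\<^sub>1(\<pi>\<^sup>*)\<close>, and the gap is at most \<open>2D\<epsilon>\<close>.\<close>

lemma subtree_append: "subtree t (p @ r) = subtree (subtree t p) r"
  by (induction p arbitrary: t) auto

lemma valid_pos_append: "valid_pos t (p @ r) \<longleftrightarrow> valid_pos t p \<and> valid_pos (subtree t p) r"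
  by (induction p arbitrary: t) auto

lemma valid_pos_snoc: "valid_pos t (p @ [i]) \<longleftrightarrow> valid_pos t p \<and> i < length (kids (subtree t p))"
  by (simp add: valid_pos_append)

lemma subtree_snoc: "subtree t (p @ [i]) = kids (subtree t p) ! i"
  by (simp add: subtree_append)

lemma valid_pos_leaf: "is_leaf s \<Longrightarrow> valid_pos s r \<longleftrightarrow> r = []"
  by (cases s; cases r) auto

lemma finite_valid_pos: "finite {p. valid_pos t p}"
proof (induction t)
  case (Leaf a b)
  then show ?case by (simp add: valid_pos_leaf)
next
  case (Node P ts)
  have "{p. valid_pos (Node P ts) p} \<subseteq> {[]} \<union> (\<Union>i<length ts. (Cons i) ` {p. valid_pos (ts ! i) p})"
  proof
    fix p assume "p \<in> {p. valid_pos (Node P ts) p}"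
    then show "p \<in> {[]} \<union> (\<Union>i<length ts. (Cons i) ` {p. valid_pos (ts ! i) p})" by (cases p) auto
  qed
  moreover have "finite ({[]} \<union> (\<Union>i<length ts. (Cons i) ` {p. valid_pos (ts ! i) p}))"
    using Node by auto
  ultimately show ?case by (rule finite_subset)
qed

lemma finite_leaf_positions: "finite (leaf_positions t)"
  unfolding leaf_positions_def using finite_valid_pos by (rule rev_finite_subset) auto

lemma depth_kids_less: "u \<in> set (kids s) \<Longrightarrow> depth u < depth s"
  by (cases s) (auto simp: le_imp_less_Suc)

lemma depth_subtree_snoc:
  assumes "depth (subtree t p) \<le> Suc n" "i < length (kids (subtree t p))"
  shows "depth (subtree t (p @ [i])) \<le> n"
  using depth_kids_less[OF nth_mem[OF assms(2)]] assms(1) by (simp add: subtree_snoc)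

lemma is_leaf_if_depth_0: "depth s = 0 \<Longrightarrow> is_leaf s"
  by (cases s) auto

lemma snoc_not_extends:
  assumes "\<nexists>r. p = c @ r" "p @ [m] \<noteq> c"
  shows "\<nexists>r. p @ [m] = c @ r"
proof
  assume "\<exists>r. p @ [m] = c @ r"
  then obtain r where "p @ [m] = c @ r" by blast
  with assms show False by (cases r rule: rev_cases) auto
qed

lemma tau_neq_PInf: "tau t p i \<noteq> \<infinity>"
proof -
  define A where
    "A = (\<lambda>j. ereal (vlow (kids (subtree t p) ! j))) ` {j. j < length (kids (subtree t p)) \<and> j \<noteq> i}"
  have "Sup A \<noteq> \<infinity>"
  proof (cases "A = {}")
    case False
    moreover have "finite A" by (simp add: A_def)
    ultimately have "Sup A \<in> A" by (simp add: cSup_eq_Max)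
    then show ?thesis by (auto simp: A_def)
  qed (simp add: bot_ereal_def)
  then show ?thesis by (simp add: tau_def A_def Let_def)
qed

definition leaves_below :: "gtree \<Rightarrow> nat list \<Rightarrow> nat list set" where
  "leaves_below t c = {l \<in> leaf_positions t. \<exists>r. l = c @ r}"

lemma reach_prob_eq: "reach_prob t q c = sum q (leaves_below t c)"
  unfolding reach_prob_def leaves_below_def ..

lemma leaves_below_root: "leaves_below t [] = leaf_positions t"
  unfolding leaves_below_def by simp

lemma finite_leaves_below: "finite (leaves_below t c)"
  unfolding leaves_below_def using finite_leaf_positions by simp

lemma leaves_below_leaf:
  assumes "valid_pos t p" "is_leaf (subtree t p)"
  shows "leaves_below t p = {p}"
  using assms by (auto simp: leaves_below_def leaf_positions_def valid_pos_append valid_pos_leaf)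

lemma leaves_below_node:
  assumes "\<not> is_leaf (subtree t p)"
  shows "leaves_below t p = (\<Union>i<length (kids (subtree t p)). leaves_below t (p @ [i]))"
proof (intro equalityI subsetI)
  fix l assume l: "l \<in> leaves_below t p"
  then obtain r where r: "l = p @ r" "valid_pos t l" "is_leaf (subtree t l)"
    unfolding leaves_below_def leaf_positions_def by auto
  with assms obtain i r' where "r = i # r'" by (cases r) auto
  with l r show "l \<in> (\<Union>i<length (kids (subtree t p)). leaves_below t (p @ [i]))"
    by (auto simp: leaves_below_def valid_pos_append)
qed (auto simp: leaves_below_def)

lemma sum_leaves_below_node:
  assumes "\<not> is_leaf (subtree t p)"
  shows "(\<Sum>l\<in>leaves_below t p. f l)
    = (\<Sum>i<length (kids (subtree t p)). \<Sum>l\<in>leaves_below t (p @ [i]). f l)"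
  unfolding leaves_below_node[OF assms]
  by (rule sum.UNION_disjoint) (auto simp: leaves_below_def finite_leaf_positions)

lemma edist_commute: "edist a b = edist b a"
  unfolding edist_def by (cases a; cases b) auto

lemma edist_nonneg: "0 \<le> edist a b"
  by (simp add: edist_def)

lemma edist_le_Linf: "edist (f x) (g x) \<le> Linf f g"
  unfolding Linf_def by (rule SUP_upper) simp

lemma Linf_nonneg: "0 \<le> Linf f g"
  using edist_nonneg edist_le_Linf order_trans by blast

lemma Linf_commute: "Linf f g = Linf g f"
  unfolding Linf_def by (simp add: edist_commute)

lemma edist_le_imp_lower:
  assumes "edist a b \<le> ereal e" "ereal c \<le> b"
  shows "ereal (c - e) \<le> a"
proof -
  have "0 \<le> e" using assms(1) edist_nonneg[of a b] by (meson ereal_less_eq(5) order_trans)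
  then show ?thesis
    using assms unfolding edist_def by (cases a; cases b) (auto split: if_splits)
qed

lemma Linf_le_imp_lower:
  assumes "Linf f g \<le> ereal e" "ereal c \<le> g x"
  shows "ereal (c - e) \<le> f x"
  using edist_le_imp_lower[OF order_trans[OF edist_le_Linf assms(1)] assms(2)] .

lemma sorted_list_cover:
  fixes x :: real
  assumes "sorted_wrt (<) xs" "xs \<noteq> []" "hd xs \<le> x" "x \<le> last xs"
  shows "x = hd xs \<or> (\<exists>k. Suc k < length xs \<and> xs ! k \<le> x \<and> x \<le> xs ! Suc k)"
  using assms
proof (induction xs)
  case (Cons y zs)
  show ?case
  proof (cases "zs = [] \<or> x \<le> hd zs")
    case True
    then show ?thesis using Cons.prems by (cases zs) (auto intro!: exI[of _ 0])
  next
    case False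
    then have "x = hd zs \<or> (\<exists>k. Suc k < length zs \<and> zs ! k \<le> x \<and> x \<le> zs ! Suc k)"
      using Cons by simp
    then show ?thesis
    proof
      assume "x = hd zs"
      then show ?thesis using False Cons.prems(3) by (auto simp: hd_conv_nth intro!: exI[of _ 0])
    next
      assume "\<exists>k. Suc k < length zs \<and> zs ! k \<le> x \<and> x \<le> zs ! Suc k"
      then obtain k where "Suc k < length zs" "zs ! k \<le> x" "x \<le> zs ! Suc k" by blast
      then show ?thesis by (auto intro!: exI[of _ "Suc k"])
    qed
  qed
qed simp

lemma pwl_on_neq_PInf:
  assumes "pwl_on a b f"
  shows "f x \<noteq> \<infinity>"
proof -
  obtain xs ys where xs: "xs \<noteq> []" "sorted_wrt (<) xs" "hd xs = a" "last xs = b"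
    and hd: "f (hd xs) = ereal (hd ys)"
    and segments: "\<forall>k. Suc k < length xs \<longrightarrow> (\<forall>x. xs ! k \<le> x \<and> x \<le> xs ! Suc k \<longrightarrow>
          f x = ereal (ys ! k + (x - xs ! k) / (xs ! Suc k - xs ! k) * (ys ! Suc k - ys ! k)))"
    and outside: "\<forall>x. x < a \<or> b < x \<longrightarrow> f x = - \<infinity>"
    using assms unfolding pwl_on_def by blast
  show ?thesis
  proof (cases "x < a \<or> b < x")
    case True
    then have "f x = - \<infinity>" using outside by blast
    then show ?thesis by simp
  next
    case False
    then have "x = hd xs \<or> (\<exists>k. Suc k < length xs \<and> xs ! k \<le> x \<and> x \<le> xs ! Suc k)"
      using sorted_list_cover[OF xs(2,1)] xs(3,4) by simp
    then show ?thesis using hd segments by auto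
  qed
qed

lemma learned_epf_neq_PInf: "learned_epfs t U \<Longrightarrow> valid_pos t p \<Longrightarrow> U p x \<noteq> \<infinity>"
  unfolding learned_epfs_def Uleaf_def using pwl_on_neq_PInf by (cases "is_leaf (subtree t p)") auto

lemma learned_epf_leaf:
  "learned_epfs t U \<Longrightarrow> valid_pos t p \<Longrightarrow> is_leaf (subtree t p) \<Longrightarrow>
     U p = Uleaf (rew1 (subtree t p)) (rew2 (subtree t p))"
  unfolding learned_epfs_def by auto

lemma child_fn_eq: "child_fn t U p i x = (if beta t p i \<le> ereal x then U (p @ [i]) x else - \<infinity>)"
  unfolding child_fn_def restr_def by simp

lemma child_fn_lowerD:
  "ereal c \<le> child_fn t U p i x \<Longrightarrow> ereal c \<le> U (p @ [i]) x \<and> beta t p i \<le> ereal x"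
  by (simp add: child_fn_eq split: if_splits)

lemma learned_epf_leaf_lowerD:
  "learned_epfs t U \<Longrightarrow> valid_pos t p \<Longrightarrow> is_leaf (subtree t p) \<Longrightarrow> ereal a \<le> U p \<mu> \<Longrightarrow>
    \<mu> = rew2 (subtree t p) \<and> a \<le> rew1 (subtree t p)"
  by (simp add: learned_epf_leaf Uleaf_def split: if_splits)

lemma child_fn_neq_PInf:
  "learned_epfs t U \<Longrightarrow> valid_pos t p \<Longrightarrow> i < length (kids (subtree t p)) \<Longrightarrow> child_fn t U p i x \<noteq> \<infinity>"
  using learned_epf_neq_PInf[of t U "p @ [i]"] by (simp add: child_fn_eq valid_pos_snoc)

section \<open>Chords below a set of points in the plane\<close>

definition below_chord :: "(real \<times> real) set \<Rightarrow> real \<Rightarrow> real \<Rightarrow> bool" where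
  "below_chord S \<mu> V \<longleftrightarrow> (\<exists>p1\<in>S. \<exists>p2\<in>S. \<exists>w. 0 \<le> w \<and> w \<le> 1 \<and>
      w * fst p1 + (1 - w) * fst p2 = \<mu> \<and> V \<le> w * snd p1 + (1 - w) * snd p2)"

lemma below_chord_mono: "below_chord S \<mu> V \<Longrightarrow> S \<subseteq> S' \<Longrightarrow> V' \<le> V \<Longrightarrow> below_chord S' \<mu> V'"
  unfolding below_chord_def by (meson order_trans subsetD)

lemma below_chord_point: "(\<mu>, v) \<in> S \<Longrightarrow> V \<le> v \<Longrightarrow> below_chord S \<mu> V"
  unfolding below_chord_def
  by (rule bexI[of _ "(\<mu>, v)"], rule bexI[of _ "(\<mu>, v)"]) (auto intro: exI[of _ 1])

lemma below_chord_pair: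
  assumes "(x1, v1) \<in> S" "(x2, v2) \<in> S" "x1 < \<mu>" "\<mu> < x2"
    "(x2 - \<mu>) * v1 + (\<mu> - x1) * v2 \<ge> V * (x2 - x1)"
  shows "below_chord S \<mu> V"
  unfolding below_chord_def
proof (intro bexI exI conjI)
  define w where "w = (x2 - \<mu>) / (x2 - x1)"
  have d: "0 < x2 - x1" using assms by simp
  show "0 \<le> w" "w \<le> 1" using assms d by (auto simp: w_def field_simps)
  have "w * (x2 - x1) = x2 - \<mu>" using d by (simp add: w_def)
  moreover have "w * x1 + (1 - w) * x2 = x2 - w * (x2 - x1)" by (simp add: algebra_simps)
  ultimately show "w * fst (x1, v1) + (1 - w) * fst (x2, v2) = \<mu>" by simp
  have "1 - w = (\<mu> - x1) / (x2 - x1)" using d by (simp add: w_def field_simps)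
  then have "w * v1 + (1 - w) * v2 = ((x2 - \<mu>) * v1 + (\<mu> - x1) * v2) / (x2 - x1)"
    by (simp add: w_def add_divide_distrib)
  then show "V \<le> w * snd (x1, v1) + (1 - w) * snd (x2, v2)"
    using d assms(5) by (simp add: pos_le_divide_eq)
qed (use assms in auto)

lemma sum_split_at:
  fixes f x :: "'a \<Rightarrow> real"
  assumes "finite I"
  shows "sum f I = sum f {i\<in>I. x i < \<mu>} + sum f {i\<in>I. \<mu> < x i} + sum f {i\<in>I. x i = \<mu>}"
proof -
  have "sum f I = sum f ({i\<in>I. x i < \<mu>} \<union> {i\<in>I. \<mu> < x i} \<union> {i\<in>I. x i = \<mu>})"
    by (rule sum.cong) auto
  also have "\<dots> = sum f {i\<in>I. x i < \<mu>} + sum f {i\<in>I. \<mu> < x i} + sum f {i\<in>I. x i = \<mu>}"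
    using assms by (subst sum.union_disjoint; auto)+
  finally show ?thesis .
qed

lemma mean_balance:
  fixes \<alpha> x :: "'a \<Rightarrow> real"
  assumes "finite I" "sum \<alpha> I = 1" "\<mu> = (\<Sum>i\<in>I. \<alpha> i * x i)"
  shows "(\<Sum>l\<in>{i\<in>I. x i < \<mu>}. \<alpha> l * (\<mu> - x l)) = (\<Sum>r\<in>{i\<in>I. \<mu> < x i}. \<alpha> r * (x r - \<mu>))"
proof -
  have "(\<Sum>i\<in>I. \<alpha> i * (x i - \<mu>)) = 0"
    using assms(2,3) by (simp add: right_diff_distrib sum_subtractf sum_distrib_right[symmetric])
  then show ?thesis
    using sum_split_at[OF assms(1), of "\<lambda>i. \<alpha> i * (x i - \<mu>)" x \<mu>]
    by (simp add: right_diff_distrib sum_subtractf)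
qed

text \<open>Pair every point \<open>l\<close> left of the mean \<open>\<mu>\<close> with every point \<open>r\<close> right of it, with weight
  \<open>\<alpha> l * \<alpha> r * (x r - x l)\<close>: the chords through \<open>l\<close> and \<open>r\<close>, evaluated at \<open>\<mu>\<close>, average
  together with the points on \<open>\<mu>\<close> to the given combination.\<close>
lemma convex_combination_le_if_chords_le:
  fixes \<alpha> x v :: "'a \<Rightarrow> real"
  assumes I: "finite I" and \<alpha>: "\<forall>i\<in>I. 0 \<le> \<alpha> i" "sum \<alpha> I = 1" and \<mu>: "\<mu> = (\<Sum>i\<in>I. \<alpha> i * x i)"
    and mid: "\<And>m. m \<in> I \<Longrightarrow> x m = \<mu> \<Longrightarrow> v m \<le> W"
    and chords: "\<And>l r. l \<in> I \<Longrightarrow> r \<in> I \<Longrightarrow> x l < \<mu> \<Longrightarrow> \<mu> < x r \<Longrightarrow>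
      (x r - \<mu>) * v l + (\<mu> - x l) * v r \<le> W * (x r - x l)"
  shows "(\<Sum>i\<in>I. \<alpha> i * v i) \<le> W"
proof -
  define Lft where "Lft = {i\<in>I. x i < \<mu>}"
  define Rgt where "Rgt = {i\<in>I. \<mu> < x i}"
  define Z where "Z = (\<Sum>r\<in>Rgt. \<alpha> r * (x r - \<mu>))"
  have fin: "finite Lft" "finite Rgt" using I by (simp_all add: Lft_def Rgt_def)
  have balance: "(\<Sum>l\<in>Lft. \<alpha> l * (\<mu> - x l)) = Z"
    unfolding Lft_def Rgt_def Z_def using mean_balance[OF I \<alpha>(2) \<mu>] .
  have Rgt_terms: "0 \<le> \<alpha> r * (x r - \<mu>)" if "r \<in> Rgt" for r
    using that \<alpha>(1) by (simp add: Rgt_def)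
  have Lft_terms: "0 \<le> \<alpha> l * (\<mu> - x l)" if "l \<in> Lft" for l
    using that \<alpha>(1) by (simp add: Lft_def)
  have LR: "(\<Sum>i\<in>Lft. \<alpha> i * (v i - W)) + (\<Sum>i\<in>Rgt. \<alpha> i * (v i - W)) \<le> 0"
  proof (cases "Z = 0")
    case True
    have "\<forall>r\<in>Rgt. \<alpha> r * (x r - \<mu>) = 0"
      using True Rgt_terms unfolding Z_def by (subst (asm) sum_nonneg_eq_0_iff[OF fin(2)]) auto
    moreover have "\<forall>l\<in>Lft. \<alpha> l * (\<mu> - x l) = 0"
      using Lft_terms balance[unfolded True] by (subst (asm) sum_nonneg_eq_0_iff[OF fin(1)]) auto
    ultimately show ?thesis by (simp add: Lft_def Rgt_def)
  next
    case False
    have "Z * (\<Sum>l\<in>Lft. \<alpha> l * (v l - W))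
        = (\<Sum>l\<in>Lft. \<Sum>r\<in>Rgt. \<alpha> l * \<alpha> r * ((x r - \<mu>) * (v l - W)))"
      unfolding Z_def sum_product by (subst sum.swap) (intro sum.cong refl, simp add: algebra_simps)
    moreover have "Z * (\<Sum>r\<in>Rgt. \<alpha> r * (v r - W))
        = (\<Sum>l\<in>Lft. \<Sum>r\<in>Rgt. \<alpha> l * \<alpha> r * ((\<mu> - x l) * (v r - W)))"
      unfolding balance[symmetric] sum_product by (intro sum.cong refl) (simp add: algebra_simps)
    ultimately have "Z * ((\<Sum>i\<in>Lft. \<alpha> i * (v i - W)) + (\<Sum>i\<in>Rgt. \<alpha> i * (v i - W)))
        = (\<Sum>l\<in>Lft. \<Sum>r\<in>Rgt. \<alpha> l * \<alpha> r * ((x r - \<mu>) * (v l - W) + (\<mu> - x l) * (v r - W)))"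
      by (simp add: distrib_left sum.distrib)
    also have "\<dots> \<le> 0"
      using chords \<alpha>(1)
      by (intro sum_nonpos mult_nonneg_nonpos) (auto simp: Lft_def Rgt_def algebra_simps)
    finally have "Z * ((\<Sum>i\<in>Lft. \<alpha> i * (v i - W)) + (\<Sum>i\<in>Rgt. \<alpha> i * (v i - W))) \<le> 0" .
    moreover have "0 < Z"
      using False Rgt_terms unfolding Z_def
      by (simp add: sum_nonneg order.not_eq_order_implies_strict)
    ultimately show ?thesis by (simp add: mult_le_0_iff)
  qed
  moreover have "(\<Sum>i\<in>{i\<in>I. x i = \<mu>}. \<alpha> i * (v i - W)) \<le> 0"
    using mid \<alpha>(1) by (intro sum_nonpos mult_nonneg_nonpos) auto
  ultimately have "(\<Sum>i\<in>I. \<alpha> i * (v i - W)) \<le> 0"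
    using sum_split_at[OF I, of "\<lambda>i. \<alpha> i * (v i - W)" x \<mu>] unfolding Lft_def Rgt_def by linarith
  then show ?thesis
    using \<alpha>(2) by (simp add: right_diff_distrib sum_subtractf sum_distrib_right[symmetric])
qed

lemma convex_combination_below_chord:
  fixes \<alpha> x v :: "'a \<Rightarrow> real"
  assumes I: "finite I" and \<alpha>: "\<forall>i\<in>I. 0 \<le> \<alpha> i" "sum \<alpha> I = 1" and S: "\<forall>i\<in>I. (x i, v i) \<in> S"
  shows "below_chord S (\<Sum>i\<in>I. \<alpha> i * x i) (\<Sum>i\<in>I. \<alpha> i * v i)"
proof -
  define \<mu> where "\<mu> = (\<Sum>i\<in>I. \<alpha> i * x i)"
  define chord where "chord l r = ((x r - \<mu>) * v l + (\<mu> - x l) * v r) / (x r - x l)" for l r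
  define C where "C = v ` {m\<in>I. x m = \<mu>} \<union> (\<lambda>(l, r). chord l r) ` ({l\<in>I. x l < \<mu>} \<times> {r\<in>I. \<mu> < x r})"
  have bound: "(\<Sum>i\<in>I. \<alpha> i * v i) \<le> W" if "\<forall>c\<in>C. c \<le> W" for W
  proof (rule convex_combination_le_if_chords_le[OF I \<alpha> \<mu>_def])
    fix l r assume "l \<in> I" "r \<in> I" "x l < \<mu>" "\<mu> < x r"
    then have "chord l r \<in> C" by (force simp: C_def)
    then show "(x r - \<mu>) * v l + (\<mu> - x l) * v r \<le> W * (x r - x l)"
      using that \<open>x l < \<mu>\<close> \<open>\<mu> < x r\<close> by (auto simp: chord_def pos_divide_le_eq)
  qed (use that in \<open>auto simp: C_def\<close>)
  have "C \<noteq> {}"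
    using bound[of "(\<Sum>i\<in>I. \<alpha> i * v i) - 1"] by auto
  moreover have "finite C" using I by (simp add: C_def)
  ultimately have "Max C \<in> C" and V_le: "(\<Sum>i\<in>I. \<alpha> i * v i) \<le> Max C"
    using bound by simp_all
  then consider m where "m \<in> I" "x m = \<mu>" "Max C = v m"
    | l r where "l \<in> I" "r \<in> I" "x l < \<mu>" "\<mu> < x r" "Max C = chord l r"
    unfolding C_def by auto
  then show ?thesis
  proof cases
    case 1
    then show ?thesis using S V_le unfolding \<mu>_def by (metis below_chord_point)
  next
    case 2
    then have "(\<Sum>i\<in>I. \<alpha> i * v i) * (x r - x l) \<le> (x r - \<mu>) * v l + (\<mu> - x l) * v r"
      using V_le by (simp add: chord_def pos_le_divide_eq)
    then show ?thesis using S 2 unfolding \<mu>_def by (intro below_chord_pair) auto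
  qed
qed

lemma below_chord_concave:
  assumes "below_chord S x a" "below_chord S y b" "0 \<le> w" "w \<le> 1"
  shows "below_chord S (w * x + (1 - w) * y) (w * a + (1 - w) * b)"
proof -
  obtain p1 p2 t1 where p: "p1 \<in> S" "p2 \<in> S" "0 \<le> t1" "t1 \<le> 1"
    "t1 * fst p1 + (1 - t1) * fst p2 = x" "a \<le> t1 * snd p1 + (1 - t1) * snd p2"
    using assms(1) unfolding below_chord_def by blast
  obtain p3 p4 t2 where q: "p3 \<in> S" "p4 \<in> S" "0 \<le> t2" "t2 \<le> 1"
    "t2 * fst p3 + (1 - t2) * fst p4 = y" "b \<le> t2 * snd p3 + (1 - t2) * snd p4"
    using assms(2) unfolding below_chord_def by blast
  define \<alpha> where "\<alpha> = (!) [w * t1, w * (1 - t1), (1 - w) * t2, (1 - w) * (1 - t2)]"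
  define pts where "pts = (!) [p1, p2, p3, p4]"
  have "\<forall>i\<in>{0,1,2,3}. 0 \<le> \<alpha> i" using assms(3,4) p q by (simp add: \<alpha>_def)
  moreover have "sum \<alpha> {0,1,2,3} = 1" by (simp add: \<alpha>_def algebra_simps)
  moreover have "\<forall>i\<in>{0,1,2,3}. (fst (pts i), snd (pts i)) \<in> S" using p q by (simp add: pts_def)
  ultimately have chord:
      "below_chord S (\<Sum>i\<in>{0,1,2,3}. \<alpha> i * fst (pts i)) (\<Sum>i\<in>{0,1,2,3}. \<alpha> i * snd (pts i))"
    by (rule convex_combination_below_chord[rotated]) simp
  have mean: "(\<Sum>i\<in>{0,1,2,3}. \<alpha> i * fst (pts i)) = w * x + (1 - w) * y"
    unfolding p(5)[symmetric] q(5)[symmetric] by (simp add: \<alpha>_def pts_def algebra_simps)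
  have height: "w * a + (1 - w) * b \<le> (\<Sum>i\<in>{0,1,2,3}. \<alpha> i * snd (pts i))"
  proof -
    have "w * a + (1 - w) * b
        \<le> w * (t1 * snd p1 + (1 - t1) * snd p2) + (1 - w) * (t2 * snd p3 + (1 - t2) * snd p4)"
      using p(6) q(6) assms(3,4) by (intro add_mono mult_left_mono) auto
    also have "\<dots> = (\<Sum>i\<in>{0,1,2,3}. \<alpha> i * snd (pts i))"
      by (simp add: \<alpha>_def pts_def algebra_simps)
    finally show ?thesis .
  qed
  show ?thesis using below_chord_mono[OF chord order_refl height] unfolding mean .
qed

lemma below_chordI:
  assumes "0 \<le> w" "w \<le> 1" "0 < w \<Longrightarrow> (x1, v1) \<in> S" "w < 1 \<Longrightarrow> (x2, v2) \<in> S"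
    "w * x1 + (1 - w) * x2 = \<mu>" "V \<le> w * v1 + (1 - w) * v2"
  shows "below_chord S \<mu> V"
proof (cases "w = 0 \<or> w = 1")
  case True
  then show ?thesis using assms by (auto intro: below_chord_point)
next
  case False
  then show ?thesis using assms unfolding below_chord_def by force
qed

section \<open>Concave envelopes\<close>

lemma concave_ext_jensen:
  assumes "concave_ext h" "finite I" "\<forall>i\<in>I. 0 \<le> \<alpha> i" "sum \<alpha> I = 1" "\<forall>i\<in>I. ereal (y i) \<le> h (x i)"
  shows "ereal (\<Sum>i\<in>I. \<alpha> i * y i) \<le> h (\<Sum>i\<in>I. \<alpha> i * x i)"
  using assms(2-)
proof (induction I arbitrary: \<alpha> rule: finite_induct)
  case (insert k I)
  show ?case
  proof (cases "sum \<alpha> I = 0")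
    case True
    then have "\<forall>i\<in>I. \<alpha> i = 0" using insert by (simp add: sum_nonneg_eq_0_iff)
    then show ?thesis using insert True by simp
  next
    case False
    define \<beta> where "\<beta> i = \<alpha> i / sum \<alpha> I" for i
    have rest: "sum \<alpha> I = 1 - \<alpha> k" "0 \<le> sum \<alpha> I" using insert by (simp_all add: sum_nonneg)
    have "ereal (\<Sum>i\<in>I. \<beta> i * y i) \<le> h (\<Sum>i\<in>I. \<beta> i * x i)"
      using insert False rest by (intro insert.IH) (auto simp: \<beta>_def sum_divide_distrib[symmetric])
    then have "ereal (\<alpha> k * y k + (1 - \<alpha> k) * (\<Sum>i\<in>I. \<beta> i * y i))
        \<le> h (\<alpha> k * x k + (1 - \<alpha> k) * (\<Sum>i\<in>I. \<beta> i * x i))"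
      using assms(1) insert.prems rest unfolding concave_ext_def by simp
    moreover have "(1 - \<alpha> k) * (\<Sum>i\<in>I. \<beta> i * z i) = (\<Sum>i\<in>I. \<alpha> i * z i)" for z
      using False rest by (simp add: \<beta>_def sum_distrib_left)
    ultimately show ?thesis using insert by simp
  qed
qed simp

lemma convex_combination_le_cenv:
  assumes "finite I" "\<forall>i\<in>I. 0 \<le> \<alpha> i" "sum \<alpha> I = 1" "\<forall>i\<in>I. ereal (y i) \<le> g (x i)"
  shows "ereal (\<Sum>i\<in>I. \<alpha> i * y i) \<le> cenv g (\<Sum>i\<in>I. \<alpha> i * x i)"
  unfolding cenv_def
proof (rule Inf_greatest, clarify)
  fix h assume "concave_ext h" "\<forall>x. g x \<le> h x"
  then show "ereal (\<Sum>i\<in>I. \<alpha> i * y i) \<le> h (\<Sum>i\<in>I. \<alpha> i * x i)"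
    using assms by (intro concave_ext_jensen) (auto intro: order_trans)
qed

lemma ereal_le_mix_split:
  fixes X Y :: ereal
  assumes "X \<noteq> \<infinity>" "Y \<noteq> \<infinity>" "0 \<le> w" "w \<le> 1" "ereal a \<le> ereal w * X + ereal (1 - w) * Y"
  obtains c1 c2 where "a \<le> w * c1 + (1 - w) * c2" "0 < w \<Longrightarrow> ereal c1 \<le> X" "w < 1 \<Longrightarrow> ereal c2 \<le> Y"
proof -
  consider "w = 0" | "w = 1" | "0 < w" "w < 1" using assms(3,4) by linarith
  then show ?thesis
  proof cases
    case 1
    then show ?thesis using assms(5) that[of 0 a] by (simp add: zero_ereal_def[symmetric])
  next
    case 2
    then show ?thesis using assms(5) that[of a 0] by (simp add: zero_ereal_def[symmetric])
  next
    case 3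
    then have "X \<noteq> - \<infinity>" "Y \<noteq> - \<infinity>" using assms by (cases X; cases Y; auto)+
    then show ?thesis
      using assms that[of "real_of_ereal X" "real_of_ereal Y"] by (cases X; cases Y) auto
  qed
qed

definition kids_hypograph ::
  "gtree \<Rightarrow> (nat list \<Rightarrow> real \<Rightarrow> ereal) \<Rightarrow> nat list \<Rightarrow> (real \<times> real) set" where
  "kids_hypograph t U p = {(x, v). \<exists>i < length (kids (subtree t p)). ereal v \<le> child_fn t U p i x}"

lemma choice_obj_lowerE:
  assumes "learned_epfs t U" "valid_pos t p" "feasible_choice t p \<mu> (i, j, w, \<mu>1, \<mu>2)"
    "ereal a \<le> choice_obj t U p (i, j, w, \<mu>1, \<mu>2)"
  obtains c1 c2 where "a \<le> w * c1 + (1 - w) * c2"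
    "0 < w \<Longrightarrow> ereal c1 \<le> child_fn t U p i \<mu>1" "w < 1 \<Longrightarrow> ereal c2 \<le> child_fn t U p j \<mu>2"
proof -
  have i: "i < length (kids (subtree t p))" and j: "j < length (kids (subtree t p))"
    and w: "0 \<le> w" "w \<le> 1"
    using assms(3) by (simp_all add: feasible_choice_def)
  have "ereal a \<le> ereal w * child_fn t U p i \<mu>1 + ereal (1 - w) * child_fn t U p j \<mu>2"
    using assms(4) by (simp add: choice_obj_def)
  from ereal_le_mix_split[OF child_fn_neq_PInf[OF assms(1,2) i] child_fn_neq_PInf[OF assms(1,2) j] w
    this]
  show ?thesis using that by blast
qed

lemma choice_obj_neq_PInf:
  assumes "learned_epfs t U" "valid_pos t p" "feasible_choice t p \<mu> c"
  shows "choice_obj t U p c \<noteq> \<infinity>"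
proof -
  obtain i j w \<mu>1 \<mu>2 where c: "c = (i, j, w, \<mu>1, \<mu>2)" by (cases c) auto
  then have "child_fn t U p i \<mu>1 \<noteq> \<infinity>" "child_fn t U p j \<mu>2 \<noteq> \<infinity>" "0 \<le> w" "w \<le> 1"
    using assms child_fn_neq_PInf[OF assms(1,2)] by (auto simp: feasible_choice_def)
  then show ?thesis
    unfolding c choice_obj_def
    by (cases "child_fn t U p i \<mu>1"; cases "child_fn t U p j \<mu>2") (auto simp: ereal_mult_infty)
qed

lemma below_chord_if_choice_obj:
  assumes "learned_epfs t U" "valid_pos t p" "feasible_choice t p \<mu> c"
    "ereal a \<le> choice_obj t U p c"
  shows "below_chord (kids_hypograph t U p) \<mu> a"
proof -
  obtain i j w \<mu>1 \<mu>2 where c: "c = (i, j, w, \<mu>1, \<mu>2)" by (cases c) auto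
  obtain c1 c2 where "a \<le> w * c1 + (1 - w) * c2"
    "0 < w \<Longrightarrow> ereal c1 \<le> child_fn t U p i \<mu>1" "w < 1 \<Longrightarrow> ereal c2 \<le> child_fn t U p j \<mu>2"
    using choice_obj_lowerE[OF assms(1,2) assms(3,4)[unfolded c]] by blast
  then show ?thesis
    using assms(3) unfolding c feasible_choice_def kids_hypograph_def
    by (intro below_chordI[of w \<mu>1 c1 _ \<mu>2 c2]) auto
qed

lemma choice_obj_if_below_chord:
  assumes "below_chord (kids_hypograph t U p) \<mu> a"
  shows "\<exists>c. feasible_choice t p \<mu> c \<and> ereal a \<le> choice_obj t U p c"
proof -
  obtain x1 v1 x2 v2 w i j where "i < length (kids (subtree t p))" "j < length (kids (subtree t p))"
    "ereal v1 \<le> child_fn t U p i x1" "ereal v2 \<le> child_fn t U p j x2"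
    "0 \<le> w" "w \<le> 1" "w * x1 + (1 - w) * x2 = \<mu>" "a \<le> w * v1 + (1 - w) * v2"
    using assms unfolding below_chord_def kids_hypograph_def by auto
  note chord = this
  have "ereal a \<le> ereal w * ereal v1 + ereal (1 - w) * ereal v2"
    using chord(8) by simp
  also have "\<dots> \<le> ereal w * child_fn t U p i x1 + ereal (1 - w) * child_fn t U p j x2"
    using chord by (intro add_mono ereal_mult_left_mono) auto
  finally show ?thesis
    using chord unfolding feasible_choice_def choice_obj_def
    by (intro exI[of _ "(i, j, w, x1, x2)"]) auto
qed

text \<open>The value of the selected choice, as a function of the promise, is concave because
  chords below the children's hypographs can be merged (lemma below_chord_concave); it dominates
  every child, hence also their concave envelope.\<close>
lemma target_le_selected_obj:
  assumes learned: "learned_epfs t U" and sel: "induced_selection t U sel"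
    and p: "valid_pos t p" "\<not> is_leaf (subtree t p)"
  shows "target t U p \<mu> \<le> choice_obj t U p (sel p \<mu>)"
proof -
  define h where "h x = choice_obj t U p (sel p x)" for x
  have "is_maximizer t U p x (sel p x)" for x
    using sel p unfolding induced_selection_def by blast
  then have feasible: "feasible_choice t p x (sel p x)"
    and max: "feasible_choice t p x c \<Longrightarrow> choice_obj t U p c \<le> h x" for x c
    unfolding is_maximizer_def h_def by blast+
  have "concave_ext h"
    unfolding concave_ext_def
  proof (intro allI impI)
    fix x y a b w :: real
    assume "0 \<le> w" "w \<le> 1" "ereal a \<le> h x" "ereal b \<le> h y"
    then have "below_chord (kids_hypograph t U p) (w * x + (1 - w) * y) (w * a + (1 - w) * b)"
      using below_chord_if_choice_obj[OF learned p(1) feasible] unfolding h_def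
      by (intro below_chord_concave) auto
    then show "ereal (w * a + (1 - w) * b) \<le> h (w * x + (1 - w) * y)"
      using choice_obj_if_below_chord max by (meson order_trans)
  qed
  moreover have "h x \<noteq> \<infinity>" for x
    unfolding h_def using choice_obj_neq_PInf[OF learned p(1) feasible] .
  moreover have "(SUP i\<in>{..<length (kids (subtree t p))}. child_fn t U p i x) \<le> h x" for x
  proof (rule SUP_least)
    fix i assume "i \<in> {..<length (kids (subtree t p))}"
    then have "feasible_choice t p x (i, i, 1, x, x)" by (simp add: feasible_choice_def)
    moreover have "choice_obj t U p (i, i, 1, x, x) = child_fn t U p i x"
      by (simp add: choice_obj_def zero_ereal_def[symmetric] one_ereal_def[symmetric])
    ultimately show "child_fn t U p i x \<le> h x" using max by metis
  qed
  ultimately have "cenv (\<lambda>x. SUP i\<in>{..<length (kids (subtree t p))}. child_fn t U p i x) \<mu> \<le> h \<mu>"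
    unfolding cenv_def by (intro Inf_lower) blast
  then show ?thesis using p(2) by (simp add: target_def h_def)
qed

section \<open>SEFCE payoffs lie below the learned EPFs\<close>

definition cond_exp :: "gtree \<Rightarrow> (nat list \<Rightarrow> real) \<Rightarrow> (nat list \<Rightarrow> real) \<Rightarrow> nat list \<Rightarrow> real" where
  "cond_exp t q f c = (\<Sum>l\<in>leaves_below t c. q l * f l) / reach_prob t q c"

lemma R2_from_eq_cond_exp: "R2_from t q c = cond_exp t q (\<lambda>l. rew2 (subtree t l)) c"
  unfolding R2_from_def cond_exp_def leaves_below_def ..

lemma cond_exp_leaf:
  assumes "valid_pos t p" "is_leaf (subtree t p)" "0 < reach_prob t q p"
  shows "cond_exp t q f p = f p"
  using assms by (simp add: cond_exp_def reach_prob_eq leaves_below_leaf)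

lemma cond_exp_node:
  assumes q: "\<forall>l. 0 \<le> q l" and p: "\<not> is_leaf (subtree t p)" "0 < reach_prob t q p"
  defines "K \<equiv> {i. i < length (kids (subtree t p)) \<and> 0 < reach_prob t q (p @ [i])}"
  shows "cond_exp t q f p
    = (\<Sum>i\<in>K. reach_prob t q (p @ [i]) / reach_prob t q p * cond_exp t q f (p @ [i]))"
proof -
  have "(\<Sum>l\<in>leaves_below t (p @ [i]). q l * f l) = 0"
    if "i < length (kids (subtree t p))" "i \<notin> K" for i
  proof -
    have "sum q (leaves_below t (p @ [i])) = 0"
      using that q by (simp add: K_def reach_prob_eq order.antisym sum_nonneg)
    then have "\<forall>l\<in>leaves_below t (p @ [i]). q l = 0"
      using q by (simp add: sum_nonneg_eq_0_iff finite_leaves_below)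
    then show ?thesis by simp
  qed
  then have "(\<Sum>l\<in>leaves_below t p. q l * f l) = (\<Sum>i\<in>K. \<Sum>l\<in>leaves_below t (p @ [i]). q l * f l)"
    unfolding sum_leaves_below_node[OF p(1)] by (intro sum.mono_neutral_right) (auto simp: K_def)
  also have "\<dots> = (\<Sum>i\<in>K. reach_prob t q (p @ [i]) * cond_exp t q f (p @ [i]))"
    by (intro sum.cong) (auto simp: K_def cond_exp_def)
  finally show ?thesis
    using p(2) by (simp add: cond_exp_def sum_divide_distrib)
qed

lemma cond_exp_const: "0 < reach_prob t q c \<Longrightarrow> cond_exp t q (\<lambda>_. 1) c = 1"
  by (simp add: cond_exp_def reach_prob_eq)

lemma SEFCE_nonneg: "is_SEFCE t q \<Longrightarrow> 0 \<le> q l"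
  unfolding is_SEFCE_def leaf_dist_def by blast

lemma SEFCE_beta_le:
  assumes "is_SEFCE t q" "valid_pos t p" "\<not> is_leaf (subtree t p)" "i < length (kids (subtree t p))"
    "0 < reach_prob t q (p @ [i])"
  shows "beta t p i \<le> ereal (R2_from t q (p @ [i]))"
  using assms unfolding is_SEFCE_def beta_def by auto

text \<open>Conditioned on reaching \<open>p\<close>, an SEFCE is a convex combination of its conditionals at the
  children of \<open>p\<close>; the incentive constraints put these points into the domains of the restricted
  child EPFs, so Jensen's inequality applies to the concave envelope.\<close>
lemma SEFCE_cond_payoff_le_target:
  assumes q: "is_SEFCE t q" and p: "valid_pos t p" "\<not> is_leaf (subtree t p)" "0 < reach_prob t q p"
    and kids: "\<And>i. i < length (kids (subtree t p)) \<Longrightarrow> 0 < reach_prob t q (p @ [i]) \<Longrightarrow>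
      ereal (cond_exp t q (\<lambda>l. rew1 (subtree t l)) (p @ [i]) - c)
        \<le> U (p @ [i]) (R2_from t q (p @ [i]))"
  shows "ereal (cond_exp t q (\<lambda>l. rew1 (subtree t l)) p - c) \<le> target t U p (R2_from t q p)"
proof -
  define K where "K = {i. i < length (kids (subtree t p)) \<and> 0 < reach_prob t q (p @ [i])}"
  define \<alpha> where "\<alpha> i = reach_prob t q (p @ [i]) / reach_prob t q p" for i
  define x where "x i = R2_from t q (p @ [i])" for i
  define y where "y i = cond_exp t q (\<lambda>l. rew1 (subtree t l)) (p @ [i]) - c" for i
  have total: "cond_exp t q f p = (\<Sum>i\<in>K. \<alpha> i * cond_exp t q f (p @ [i]))" for f
    unfolding K_def \<alpha>_def using cond_exp_node SEFCE_nonneg[OF q] p(2,3) by blast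
  have K: "finite K" "\<forall>i\<in>K. 0 \<le> \<alpha> i" and sum_\<alpha>: "sum \<alpha> K = 1"
    using total[of "\<lambda>_. 1"] p(3) by (auto simp: K_def \<alpha>_def cond_exp_const)
  have "ereal (y i) \<le> (SUP j\<in>{..<length (kids (subtree t p))}. child_fn t U p j (x i))"
    if "i \<in> K" for i
  proof -
    have i: "i < length (kids (subtree t p))" "0 < reach_prob t q (p @ [i])"
      using that by (simp_all add: K_def)
    have "ereal (y i) \<le> U (p @ [i]) (x i)"
      unfolding x_def y_def using kids[OF i] .
    moreover have "beta t p i \<le> ereal (x i)"
      unfolding x_def using SEFCE_beta_le[OF q p(1,2) i] .
    ultimately have "ereal (y i) \<le> child_fn t U p i (x i)" by (simp add: child_fn_eq)
    then show ?thesis using i(1) by (auto intro: SUP_upper2)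
  qed
  then have "ereal (\<Sum>i\<in>K. \<alpha> i * y i) \<le> target t U p (\<Sum>i\<in>K. \<alpha> i * x i)"
    unfolding target_def using p(2) K sum_\<alpha> by (simp add: convex_combination_le_cenv)
  moreover have "(\<Sum>i\<in>K. \<alpha> i * x i) = R2_from t q p"
    unfolding x_def R2_from_eq_cond_exp total ..
  moreover have "(\<Sum>i\<in>K. \<alpha> i * y i) = cond_exp t q (\<lambda>l. rew1 (subtree t l)) p - c"
    unfolding y_def total
    by (simp add: right_diff_distrib sum_subtractf sum_distrib_right[symmetric] sum_\<alpha>)
  ultimately show ?thesis by simp
qed

locale epf_approximation =
  fixes t :: gtree and U :: "nat list \<Rightarrow> real \<Rightarrow> ereal" and \<epsilon> :: real
  assumes learned: "learned_epfs t U"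
    and approx: "\<And>p. valid_pos t p \<Longrightarrow> Linf (U p) (target t U p) \<le> ereal \<epsilon>"
begin

lemma eps_nonneg: "0 \<le> \<epsilon>"
proof -
  have "0 \<le> Linf (U []) (target t U [])" by (rule Linf_nonneg)
  also have "\<dots> \<le> ereal \<epsilon>" by (rule approx) simp
  finally show ?thesis by simp
qed

lemma target_lower: "valid_pos t p \<Longrightarrow> ereal a \<le> U p \<mu> \<Longrightarrow> ereal (a - \<epsilon>) \<le> target t U p \<mu>"
  using Linf_le_imp_lower[of "target t U p" "U p"] approx[of p] by (simp add: Linf_commute)

lemma U_lower: "valid_pos t p \<Longrightarrow> ereal a \<le> target t U p \<mu> \<Longrightarrow> ereal (a - \<epsilon>) \<le> U p \<mu>"
  using Linf_le_imp_lower[of "U p" "target t U p"] approx[of p] by simp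

lemma SEFCE_cond_payoff_le_U_leaf:
  assumes "valid_pos t p" "is_leaf (subtree t p)" "0 < reach_prob t q p"
  shows "ereal (cond_exp t q (\<lambda>l. rew1 (subtree t l)) p) \<le> U p (R2_from t q p)"
  using assms
  by (simp add: R2_from_eq_cond_exp cond_exp_leaf learned_epf_leaf[OF learned] Uleaf_def)

lemma SEFCE_cond_payoff_le_U:
  assumes q: "is_SEFCE t q"
  shows "valid_pos t p \<Longrightarrow> depth (subtree t p) \<le> n \<Longrightarrow> 0 < reach_prob t q p \<Longrightarrow>
    ereal (cond_exp t q (\<lambda>l. rew1 (subtree t l)) p - n * \<epsilon>) \<le> U p (R2_from t q p)"
proof (induction n arbitrary: p)
  case 0
  then show ?case using SEFCE_cond_payoff_le_U_leaf is_leaf_if_depth_0 by simp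
next
  case (Suc n)
  show ?case
  proof (cases "is_leaf (subtree t p)")
    case True
    have "ereal (cond_exp t q (\<lambda>l. rew1 (subtree t l)) p - Suc n * \<epsilon>)
        \<le> ereal (cond_exp t q (\<lambda>l. rew1 (subtree t l)) p)"
      using eps_nonneg by simp
    also have "\<dots> \<le> U p (R2_from t q p)"
      by (rule SEFCE_cond_payoff_le_U_leaf[OF Suc.prems(1) True Suc.prems(3)])
    finally show ?thesis .
  next
    case False
    have "ereal (cond_exp t q (\<lambda>l. rew1 (subtree t l)) p - n * \<epsilon>) \<le> target t U p (R2_from t q p)"
      using Suc.IH Suc.prems depth_subtree_snoc
      by (intro SEFCE_cond_payoff_le_target[OF q Suc.prems(1) False Suc.prems(3)])
        (simp add: valid_pos_snoc)
    then have "ereal (cond_exp t q (\<lambda>l. rew1 (subtree t l)) p - n * \<epsilon> - \<epsilon>) \<le> U p (R2_from t q p)"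
      by (rule U_lower[OF Suc.prems(1)])
    then show ?thesis by (simp add: algebra_simps)
  qed
qed

lemma SEFCE_payoff_le_U_root:
  assumes q: "is_SEFCE t q"
  shows "ereal (R1 t q - depth t * \<epsilon>) \<le> U [] (R2_from t q [])"
proof -
  have "reach_prob t q [] = 1"
    using q by (simp add: reach_prob_eq leaves_below_root is_SEFCE_def leaf_dist_def)
  moreover have "cond_exp t q (\<lambda>l. rew1 (subtree t l)) [] = R1 t q"
    using calculation by (simp add: cond_exp_def R1_def leaves_below_root)
  ultimately show ?thesis using SEFCE_cond_payoff_le_U[OF q, of "[]" "depth t"] by simp
qed

end

section \<open>The induced play\<close>

primrec play_dist ::
  "gtree \<Rightarrow> (nat list \<Rightarrow> real \<Rightarrow> choice) \<Rightarrow> nat \<Rightarrow> nat list \<Rightarrow> real \<Rightarrow> nat list \<Rightarrow> real" where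
  "play_dist t sel 0 p \<mu> = (\<lambda>l. if l = p then 1 else 0)"
| "play_dist t sel (Suc n) p \<mu> = (if is_leaf (subtree t p) then (\<lambda>l. if l = p then 1 else 0)
     else (case sel p \<mu> of (i, j, w, \<mu>1, \<mu>2) \<Rightarrow>
       (\<lambda>l. w * play_dist t sel n (p @ [i]) \<mu>1 l + (1 - w) * play_dist t sel n (p @ [j]) \<mu>2 l)))"

lemma sum_play_dist_leaf:
  assumes "valid_pos t p" "is_leaf (subtree t p)"
  shows "(\<Sum>l\<in>leaf_positions t. play_dist t sel n p \<mu> l * g l) = g p"
proof -
  have "p \<in> leaf_positions t" using assms by (simp add: leaf_positions_def)
  moreover have "play_dist t sel n p \<mu> l * g l = (if l = p then g l else 0)" for l
    using assms(2) by (cases n) simp_all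
  ultimately show ?thesis by (simp add: finite_leaf_positions)
qed

lemma sum_play_dist_node:
  assumes "\<not> is_leaf (subtree t p)" "sel p \<mu> = (i, j, w, \<mu>1, \<mu>2)"
  shows "(\<Sum>l\<in>L. play_dist t sel (Suc n) p \<mu> l * g l)
    = w * (\<Sum>l\<in>L. play_dist t sel n (p @ [i]) \<mu>1 l * g l)
      + (1 - w) * (\<Sum>l\<in>L. play_dist t sel n (p @ [j]) \<mu>2 l * g l)"
proof -
  have "play_dist t sel (Suc n) p \<mu> l * g l
      = w * (play_dist t sel n (p @ [i]) \<mu>1 l * g l)
        + (1 - w) * (play_dist t sel n (p @ [j]) \<mu>2 l * g l)" for l
    using assms by (simp add: algebra_simps)
  then show ?thesis by (simp add: sum.distrib sum_distrib_left)
qed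

locale induced_play = epf_approximation +
  fixes sel :: "nat list \<Rightarrow> real \<Rightarrow> choice"
  assumes induced: "induced_selection t U sel"
begin

lemma selection_feasible:
  assumes "valid_pos t p" "\<not> is_leaf (subtree t p)" "sel p \<mu> = (i, j, w, \<mu>1, \<mu>2)"
  shows "i < length (kids (subtree t p))" "j < length (kids (subtree t p))" "0 \<le> w" "w \<le> 1"
    "w * \<mu>1 + (1 - w) * \<mu>2 = \<mu>"
proof -
  have "feasible_choice t p \<mu> (sel p \<mu>)"
    using induced assms(1,2) unfolding induced_selection_def is_maximizer_def by blast
  then show "i < length (kids (subtree t p))" "j < length (kids (subtree t p))" "0 \<le> w" "w \<le> 1"
    "w * \<mu>1 + (1 - w) * \<mu>2 = \<mu>"
    using assms(3) by (simp_all add: feasible_choice_def)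
qed

text \<open>The selected choice is worth at least the target, which is \<open>\<epsilon>\<close>-close to \<open>U p\<close>.\<close>
lemma selection_step:
  assumes p: "valid_pos t p" "\<not> is_leaf (subtree t p)" and a: "ereal a \<le> U p \<mu>"
    and s: "sel p \<mu> = (i, j, w, \<mu>1, \<mu>2)"
  obtains c1 c2 where "a - \<epsilon> \<le> w * c1 + (1 - w) * c2"
    "0 < w \<Longrightarrow> ereal c1 \<le> U (p @ [i]) \<mu>1 \<and> beta t p i \<le> ereal \<mu>1"
    "w < 1 \<Longrightarrow> ereal c2 \<le> U (p @ [j]) \<mu>2 \<and> beta t p j \<le> ereal \<mu>2"
proof -
  have "feasible_choice t p \<mu> (i, j, w, \<mu>1, \<mu>2)"
    using selection_feasible[OF p s] by (simp add: feasible_choice_def)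
  moreover have "ereal (a - \<epsilon>) \<le> choice_obj t U p (i, j, w, \<mu>1, \<mu>2)"
    using target_lower[OF p(1) a] target_le_selected_obj[OF learned induced p, of \<mu>]
    unfolding s by (rule order_trans)
  ultimately obtain c1 c2 where c: "a - \<epsilon> \<le> w * c1 + (1 - w) * c2"
    "0 < w \<Longrightarrow> ereal c1 \<le> child_fn t U p i \<mu>1" "w < 1 \<Longrightarrow> ereal c2 \<le> child_fn t U p j \<mu>2"
    using choice_obj_lowerE[OF learned p(1)] by blast
  show ?thesis by (rule that[of c1 c2]) (use c child_fn_lowerD in blast)+
qed

lemma induced_play_induct[consumes 2, case_names leaf node]:
  assumes "valid_pos t p" "depth (subtree t p) \<le> n"
    and leaf: "\<And>n p \<mu>. valid_pos t p \<Longrightarrow> is_leaf (subtree t p) \<Longrightarrow> P n p \<mu>"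
    and node: "\<And>n p \<mu> i j w \<mu>1 \<mu>2. valid_pos t p \<Longrightarrow> depth (subtree t p) \<le> Suc n \<Longrightarrow>
      \<not> is_leaf (subtree t p) \<Longrightarrow>
      sel p \<mu> = (i, j, w, \<mu>1, \<mu>2) \<Longrightarrow>
      i < length (kids (subtree t p)) \<Longrightarrow> j < length (kids (subtree t p)) \<Longrightarrow>
      0 \<le> w \<Longrightarrow> w \<le> 1 \<Longrightarrow> w * \<mu>1 + (1 - w) * \<mu>2 = \<mu> \<Longrightarrow>
      P n (p @ [i]) \<mu>1 \<Longrightarrow> P n (p @ [j]) \<mu>2 \<Longrightarrow> P (Suc n) p \<mu>"
  shows "P n p \<mu>"
  using assms(1,2)
proof (induction n arbitrary: p \<mu>)
  case 0
  then show ?case using leaf is_leaf_if_depth_0 by simp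
next
  case (Suc n p \<mu>)
  show ?case
  proof (cases "is_leaf (subtree t p)")
    case True
    then show ?thesis using leaf Suc.prems(1) by blast
  next
    case nonleaf: False
    obtain i j w \<mu>1 \<mu>2 where s: "sel p \<mu> = (i, j, w, \<mu>1, \<mu>2)" by (cases "sel p \<mu>") auto
    note feasible = selection_feasible[OF Suc.prems(1) nonleaf s]
    show ?thesis
    proof (rule node[OF Suc.prems nonleaf s feasible])
      show "P n (p @ [i]) \<mu>1" "P n (p @ [j]) \<mu>2"
        using Suc feasible by (simp_all add: valid_pos_snoc depth_subtree_snoc)
    qed
  qed
qed

lemma play_dist_total:
  "valid_pos t p \<Longrightarrow> depth (subtree t p) \<le> n \<Longrightarrow> (\<Sum>l\<in>leaf_positions t. play_dist t sel n p \<mu> l) = 1"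
proof (induction n p \<mu> rule: induced_play_induct)
  case (leaf n p \<mu>)
  then show ?case using sum_play_dist_leaf[OF leaf, of sel n \<mu> "\<lambda>_. 1"] by simp
next
  case (node n p \<mu> i j w \<mu>1 \<mu>2)
  then show ?case using sum_play_dist_node[where sel = sel and g = "\<lambda>_. 1", OF node(3,4)] by simp
qed

lemma play_value_lower:
  "valid_pos t p \<Longrightarrow> depth (subtree t p) \<le> n \<Longrightarrow> ereal a \<le> U p \<mu> \<Longrightarrow>
    a - n * \<epsilon> \<le> play_value t sel n p \<mu>"
proof (induction n p \<mu> arbitrary: a rule: induced_play_induct)
  case (leaf n p \<mu>)
  then have "a \<le> play_value t sel n p \<mu>"
    using learned_epf_leaf_lowerD[OF learned] by (cases n) simp_all
  moreover have "0 \<le> n * \<epsilon>" using eps_nonneg by simp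
  ultimately show ?case by linarith
next
  case (node n p \<mu> i j w \<mu>1 \<mu>2)
  obtain c1 c2 where c: "a - \<epsilon> \<le> w * c1 + (1 - w) * c2"
    "0 < w \<Longrightarrow> ereal c1 \<le> U (p @ [i]) \<mu>1" "w < 1 \<Longrightarrow> ereal c2 \<le> U (p @ [j]) \<mu>2"
    using selection_step[OF node(1,3) node.prems node(4)] by blast
  have "w * (c1 - n * \<epsilon>) \<le> w * play_value t sel n (p @ [i]) \<mu>1"
    using node c(2) by (cases "w = 0") (auto intro: mult_left_mono)
  moreover have "(1 - w) * (c2 - n * \<epsilon>) \<le> (1 - w) * play_value t sel n (p @ [j]) \<mu>2"
    using node c(3) by (cases "w = 1") (auto intro: mult_left_mono)
  ultimately show ?case using c(1) node(3,4) by (simp add: algebra_simps)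
qed

lemma play_dist_nonneg_support:
  "valid_pos t p \<Longrightarrow> depth (subtree t p) \<le> n \<Longrightarrow>
    0 \<le> play_dist t sel n p \<mu> l \<and> (play_dist t sel n p \<mu> l \<noteq> 0 \<longrightarrow> l \<in> leaves_below t p)"
proof (induction n p \<mu> rule: induced_play_induct)
  case (leaf n p \<mu>)
  then show ?case using leaves_below_leaf by (cases n) simp_all
next
  case (node n p \<mu> i j w \<mu>1 \<mu>2)
  moreover have "leaves_below t (p @ [k]) \<subseteq> leaves_below t p" for k
    by (auto simp: leaves_below_def)
  ultimately show ?case by auto
qed

lemma play_dist_leader_payoff:
  "valid_pos t p \<Longrightarrow> depth (subtree t p) \<le> n \<Longrightarrow>
    (\<Sum>l\<in>leaf_positions t. play_dist t sel n p \<mu> l * rew1 (subtree t l)) = play_value t sel n p \<mu>"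
proof (induction n p \<mu> rule: induced_play_induct)
  case (leaf n p \<mu>)
  then show ?case unfolding sum_play_dist_leaf[OF leaf] by (cases n) simp_all
next
  case (node n p \<mu> i j w \<mu>1 \<mu>2)
  then show ?case using sum_play_dist_node[where sel = sel, OF node(3,4)] by simp
qed

lemma play_dist_keeps_promise:
  "valid_pos t p \<Longrightarrow> depth (subtree t p) \<le> n \<Longrightarrow> ereal a \<le> U p \<mu> \<Longrightarrow>
    (\<Sum>l\<in>leaf_positions t. play_dist t sel n p \<mu> l * rew2 (subtree t l)) = \<mu>"
proof (induction n p \<mu> arbitrary: a rule: induced_play_induct)
  case (leaf n p \<mu>)
  then show ?case
    unfolding sum_play_dist_leaf[OF leaf(1,2)] using learned_epf_leaf_lowerD[OF learned] by simp
next
  case (node n p \<mu> i j w \<mu>1 \<mu>2)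
  obtain c1 c2 where c: "0 < w \<Longrightarrow> ereal c1 \<le> U (p @ [i]) \<mu>1" "w < 1 \<Longrightarrow> ereal c2 \<le> U (p @ [j]) \<mu>2"
    using selection_step[OF node(1,3) node.prems node(4)] by blast
  have i: "w * (\<Sum>l\<in>leaf_positions t. play_dist t sel n (p @ [i]) \<mu>1 l * rew2 (subtree t l))
      = w * \<mu>1"
    using node c(1) by (cases "w = 0") auto
  have j: "(1 - w) * (\<Sum>l\<in>leaf_positions t. play_dist t sel n (p @ [j]) \<mu>2 l * rew2 (subtree t l))
      = (1 - w) * \<mu>2"
    using node c(2) by (cases "w = 1") auto
  show ?case
    unfolding sum_play_dist_node[where sel = sel, OF node(3,4)] i j by (rule node(9))
qed

lemma play_dist_gain_below:
  assumes "valid_pos t p" "depth (subtree t p) \<le> n" "ereal a \<le> U p \<mu>"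
  shows "(\<Sum>l\<in>leaves_below t p. play_dist t sel n p \<mu> l * (rew2 (subtree t l) - \<tau>)) = \<mu> - \<tau>"
proof -
  have "(\<Sum>l\<in>leaves_below t p. play_dist t sel n p \<mu> l * (rew2 (subtree t l) - \<tau>))
      = (\<Sum>l\<in>leaf_positions t. play_dist t sel n p \<mu> l * (rew2 (subtree t l) - \<tau>))"
    using play_dist_nonneg_support[OF assms(1,2)]
    by (intro sum.mono_neutral_left) (auto simp: finite_leaf_positions leaves_below_def)
  also have "\<dots> = \<mu> - \<tau>"
    using play_dist_keeps_promise[OF assms] play_dist_total[OF assms(1,2)]
    by (simp add: right_diff_distrib sum_subtractf sum_distrib_right[symmetric])
  finally show ?thesis .
qed

text \<open>Obedience at a follower node: every visit of \<open>p0 @ [k]\<close> comes with a promise of at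
  least \<open>\<tau>\<close>, which is then kept on average.\<close>
lemma play_dist_incentive:
  assumes follower: "owner (subtree t p0) = Follower" and \<tau>: "tau t p0 k = ereal \<tau>"
  shows "valid_pos t p \<Longrightarrow> depth (subtree t p) \<le> n \<Longrightarrow> ereal a \<le> U p \<mu> \<Longrightarrow>
    \<nexists>r. p = (p0 @ [k]) @ r \<Longrightarrow>
    0 \<le> (\<Sum>l\<in>leaves_below t (p0 @ [k]). play_dist t sel n p \<mu> l * (rew2 (subtree t l) - \<tau>))"
proof (induction n p \<mu> arbitrary: a rule: induced_play_induct)
  case (leaf n p \<mu>)
  then have "play_dist t sel n p \<mu> l = 0" if "l \<in> leaves_below t (p0 @ [k])" for l
    using that by (cases n) (auto simp: leaves_below_def)
  then show ?case by simp
next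
  case (node n p \<mu> i j w \<mu>1 \<mu>2)
  define S where "S m \<mu>' = (\<Sum>l\<in>leaves_below t (p0 @ [k]).
    play_dist t sel n (p @ [m]) \<mu>' l * (rew2 (subtree t l) - \<tau>))" for m \<mu>'
  have child: "0 \<le> S m \<mu>'"
    if m: "m < length (kids (subtree t p))" "ereal b \<le> U (p @ [m]) \<mu>'" "beta t p m \<le> ereal \<mu>'"
      and IH: "\<And>a. ereal a \<le> U (p @ [m]) \<mu>' \<Longrightarrow> \<nexists>r. p @ [m] = (p0 @ [k]) @ r \<Longrightarrow> 0 \<le> S m \<mu>'"
    for m \<mu>' b
  proof (cases "p @ [m] = p0 @ [k]")
    case True
    then have "\<tau> \<le> \<mu>'" using m(3) follower \<tau> by (simp add: beta_def)
    moreover have "valid_pos t (p @ [m])" "depth (subtree t (p @ [m])) \<le> n"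
      using node(1,2) m(1) by (simp_all add: valid_pos_snoc depth_subtree_snoc)
    ultimately show ?thesis
      using play_dist_gain_below[of "p @ [m]" n b \<mu>' \<tau>] m(2) True by (simp add: S_def)
  next
    case False
    then show ?thesis using IH[OF m(2) snoc_not_extends[OF node.prems(2)]] by blast
  qed
  obtain c1 c2 where c: "0 < w \<Longrightarrow> ereal c1 \<le> U (p @ [i]) \<mu>1 \<and> beta t p i \<le> ereal \<mu>1"
    "w < 1 \<Longrightarrow> ereal c2 \<le> U (p @ [j]) \<mu>2 \<and> beta t p j \<le> ereal \<mu>2"
    using selection_step[OF node(1,3) node.prems(1) node(4)] by blast
  have "0 \<le> S i \<mu>1" if "0 < w"
    using child[OF node(5) c(1)[OF that, THEN conjunct1] c(1)[OF that, THEN conjunct2]]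
      node.IH(1)[folded S_def] by blast
  then have "0 \<le> w * S i \<mu>1" using node(7) by (cases "w = 0") auto
  have "0 \<le> S j \<mu>2" if "w < 1"
    using child[OF node(6) c(2)[OF that, THEN conjunct1] c(2)[OF that, THEN conjunct2]]
      node.IH(2)[folded S_def] by blast
  then have "0 \<le> (1 - w) * S j \<mu>2" using node(8) by (cases "w = 1") auto
  show ?case
    using \<open>0 \<le> w * S i \<mu>1\<close> \<open>0 \<le> (1 - w) * S j \<mu>2\<close>
    unfolding sum_play_dist_node[where sel = sel, OF node(3,4)] S_def by simp
qed

lemma induced_payoff_lower: "ereal a \<le> U [] \<mu> \<Longrightarrow> a - depth t * \<epsilon> \<le> induced_payoff t sel \<mu>"
  unfolding induced_payoff_def by (rule play_value_lower) simp_all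

lemma R1_play_dist: "R1 t (play_dist t sel (depth t) [] \<mu>) = induced_payoff t sel \<mu>"
  unfolding R1_def induced_payoff_def by (rule play_dist_leader_payoff) simp_all

lemma play_dist_SEFCE:
  assumes a: "ereal a \<le> U [] \<mu>"
  shows "is_SEFCE t (play_dist t sel (depth t) [] \<mu>)"
proof -
  define q where "q = play_dist t sel (depth t) [] \<mu>"
  have q: "0 \<le> q l" "q l \<noteq> 0 \<Longrightarrow> l \<in> leaf_positions t" for l
    using play_dist_nonneg_support[of "[]" "depth t" \<mu> l] by (simp_all add: q_def leaves_below_root)
  have "leaf_dist t q"
    unfolding leaf_dist_def using q play_dist_total[of "[]" "depth t" \<mu>] by (auto simp: q_def)
  moreover have "tau t p i \<le> ereal (R2_from t q (p @ [i]))"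
    if p: "valid_pos t p" "owner (subtree t p) = Follower" "0 < reach_prob t q (p @ [i])" for p i
  proof (cases "tau t p i")
    case (real \<tau>)
    have "0 \<le> (\<Sum>l\<in>leaves_below t (p @ [i]). q l * (rew2 (subtree t l) - \<tau>))"
      unfolding q_def using play_dist_incentive[OF p(2) real _ _ a] by simp
    also have "\<dots>
        = (\<Sum>l\<in>leaves_below t (p @ [i]). q l * rew2 (subtree t l)) - \<tau> * reach_prob t q (p @ [i])"
      by (simp add: reach_prob_eq right_diff_distrib sum_subtractf sum_distrib_left mult.commute)
    finally show ?thesis
      using p(3) real by (simp add: R2_from_eq_cond_exp cond_exp_def pos_le_divide_eq)
  qed (simp_all add: tau_neq_PInf)
  ultimately show ?thesis unfolding is_SEFCE_def q_def by blast
qed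

end

theorem theorem3:
  "\<exists>C::real. \<forall>(t::gtree) (U::nat list \<Rightarrow> real \<Rightarrow> ereal) (\<epsilon>::real)
      (sel::nat list \<Rightarrow> real \<Rightarrow> choice) (\<mu>root::real) (q::nat list \<Rightarrow> real).
     wf_tree t \<longrightarrow>
     learned_epfs t U \<longrightarrow>
     (\<forall>p. valid_pos t p \<longrightarrow> Linf (U p) (target t U p) \<le> ereal \<epsilon>) \<longrightarrow>
     induced_selection t U sel \<longrightarrow>
     (\<forall>\<mu>. U [] \<mu> \<le> U [] \<mu>root) \<longrightarrow>
     optimal_SEFCE t q \<longrightarrow>
     \<bar>induced_payoff t sel \<mu>root - R1 t q\<bar> \<le> C * real (depth t) * \<epsilon>"
proof (intro exI[of _ 2] allI impI)
  fix t U \<epsilon> sel \<mu>root and q :: "nat list \<Rightarrow> real"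
  assume "learned_epfs t U" "\<forall>p. valid_pos t p \<longrightarrow> Linf (U p) (target t U p) \<le> ereal \<epsilon>"
    "induced_selection t U sel" and root: "\<forall>\<mu>. U [] \<mu> \<le> U [] \<mu>root" and opt: "optimal_SEFCE t q"
  then interpret induced_play t U \<epsilon> sel by unfold_locales auto
  have SEFCE: "is_SEFCE t q" using opt by (simp add: optimal_SEFCE_def)
  have root_bound: "ereal (R1 t q - depth t * \<epsilon>) \<le> U [] \<mu>root"
    using SEFCE_payoff_le_U_root[OF SEFCE] root[rule_format, of "R2_from t q []"]
    by (rule order_trans)
  then have "R1 t q - depth t * \<epsilon> - depth t * \<epsilon> \<le> induced_payoff t sel \<mu>root"
    by (rule induced_payoff_lower)
  moreover have "induced_payoff t sel \<mu>root \<le> R1 t q"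
    using opt play_dist_SEFCE[OF root_bound]
    unfolding optimal_SEFCE_def R1_play_dist[symmetric] by blast
  ultimately show "\<bar>induced_payoff t sel \<mu>root - R1 t q\<bar> \<le> 2 * real (depth t) * \<epsilon>"
    unfolding abs_le_iff by linarith
qed

end
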